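(* Let $a_{12},a_{34},d>0$ with $d>\max\{a_{12},a_{34}\}$, and consider the isosceles trapezium in the Euclidean plane with vertices $A_1'=(-a_{12}/2,\,d)$, $A_2'=(a_{12}/2,\,d)$, $A_4=(-a_{34}/2,\,0)$, $A_3=(a_{34}/2,\,0)$. Let $F$ be the intersection point of the diagonals $A_1'A_3$ and $A_2'A_4$, let $\theta=\angle A_1'FA_2'$, let $F_{12}$ be the orthocenter of triangle $A_1'FA_2'$ and $F_{34}$ the orthocenter of triangle $A_4FA_3$, and set $w(\theta)=2\sin\frac{\theta}{2}$. Then $$l_{minT}:=2\,|A_1'F_{12}|+2\,|A_3F_{34}|+w(\theta)\,|F_{12}F_{34}| = 2(a_{34}+a_{12})\cos\frac{\theta}{2}.$$
   Context: $|XY|$ denotes Euclidean distance. The segment $M_{12}M_{34}$ joining the midpoints $M_{12}=(0,d)$ of $A_1'A_2'$ and $M_{34}=(0,0)$ of $A_4A_3$ is the common perpendicular of the two parallel sides, of length $d$. The points $F_{12}$ and $F_{34}$ lie on $M_{12}M_{34}$, with $\angle A_1'F_{12}A_2'=\angle A_3F_{34}A_4=180^\circ-\theta$. In the paper, $F_{12},F_{34}$ with the common weight $w(\theta)$ on the segment $F_{12}F_{34}$ (and unit weights on the four edges to the vertices) form the "minimum construction tree" of the trapezium. *)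

theory Defs
  imports "HOL-Analysis.Analysis"
begin

text \<open>Points of the Euclidean plane are modelled as real \<times> real; the library's
  dist/inner on this product type are the Euclidean ones.\<close>

definition vangle :: "real \<times> real \<Rightarrow> real \<times> real \<Rightarrow> real" where
  "vangle u v = arccos ((u \<bullet> v) / (norm u * norm v))"

definition angle3 :: "real \<times> real \<Rightarrow> real \<times> real \<Rightarrow> real \<times> real \<Rightarrow> real" where
  "angle3 A B C = vangle (A - B) (C - B)"

definition is_orthocenter :: "real \<times> real \<Rightarrow> real \<times> real \<Rightarrow> real \<times> real \<Rightarrow> real \<times> real \<Rightarrow> bool" where
  "is_orthocenter H A B C \<longleftrightarrow> (H - A) \<bullet> (C - B) = 0 \<and> (H - B) \<bullet> (C - A) = 0 \<and> (H - C) \<bullet> (B - A) = 0"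

definition wgt :: "real \<Rightarrow> real" where
  "wgt \<theta> = 2 * sin (\<theta> / 2)"

end

theory Submission
  imports Defs
begin

text \<open>The diagonals of the trapezium meet on its axis at height \<open>q = d a\<^sub>3\<^sub>4 / s\<close>, \<open>s = a\<^sub>1\<^sub>2 + a\<^sub>3\<^sub>4\<close>,
  and both triangles \<open>A\<^sub>1' F A\<^sub>2'\<close> and \<open>A\<^sub>4 F A\<^sub>3\<close> are isosceles with apex \<open>F\<close> and the same
  ratio \<open>x = s / (2 d)\<close> of half-base to height. An isosceles triangle with half-base \<open>c\<close> and
  height \<open>t\<close> has apex angle \<open>2 arctan (c / t)\<close> and its orthocenter on the axis at distance
  \<open>c\<^sup>2 / t\<close> from the base, so with \<open>\<phi> = arctan x = \<theta> / 2\<close> every length in \<open>l\<^sub>m\<^sub>i\<^sub>n\<^sub>T\<close> is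
  explicit: \<open>|A\<^sub>1'F\<^sub>1\<^sub>2| = (a\<^sub>1\<^sub>2/2) / cos \<phi>\<close>, \<open>|A\<^sub>3F\<^sub>3\<^sub>4| = (a\<^sub>3\<^sub>4/2) / cos \<phi>\<close> and
  \<open>|F\<^sub>1\<^sub>2F\<^sub>3\<^sub>4| = d - s x / 2\<close>. Since \<open>2 d tan \<phi> = s\<close>, the sum collapses to \<open>2 s cos \<phi>\<close>.\<close>

lemma trapezium_diagonals_meet:
  fixes a b d :: real
  assumes "a + b \<noteq> 0" "d \<noteq> 0"
    and "F \<in> closed_segment (- a / 2, d) (b / 2, 0)"
    and "F \<in> closed_segment (a / 2, d) (- b / 2, 0)"
  shows "F = (0, d * b / (a + b))"
proof -
  obtain u where u: "F = ((1 - u) * (- a / 2) + u * (b / 2), (1 - u) * d)"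
    using assms(3) unfolding in_segment by (auto simp: algebra_simps)
  obtain v where v: "F = ((1 - v) * (a / 2) + v * (- b / 2), (1 - v) * d)"
    using assms(4) unfolding in_segment by (auto simp: algebra_simps)
  have "u = v" using u v \<open>d \<noteq> 0\<close> by auto
  then have "(1 - u) * a = u * b" using u v by (auto simp: algebra_simps)
  then have "u = a / (a + b)" using assms(1) by (simp add: field_simps)
  then show ?thesis using u assms(1) by (simp add: field_simps)
qed

lemma orthocenter_isosceles:
  fixes c h t :: real
  assumes "c \<noteq> 0" "t \<noteq> 0" "is_orthocenter H (- c, h) (0, h - t) (c, h)"
  shows "H = (0, h - c\<^sup>2 / t)"
proof (cases H)
  case (Pair x y)
  have "(x + c) * c + (y - h) * t = 0" "2 * c * x = 0"
    using assms(3) unfolding is_orthocenter_def Pair by (auto simp: inner_prod_def algebra_simps)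
  with assms(1,2) show ?thesis
    by (simp add: Pair field_simps power2_eq_square)
qed

lemma cos_double_arctan: "cos (2 * arctan x) = (1 - x\<^sup>2) / (1 + x\<^sup>2)"
proof -
  have "1 + x\<^sup>2 > 0" by (simp add: add_pos_nonneg)
  then show ?thesis
    by (simp add: cos_double cos_arctan sin_arctan power_divide diff_divide_distrib)
qed

lemma vangle_isosceles:
  fixes c t :: real
  assumes "t \<noteq> 0"
  shows "vangle (- c, t) (c, t) = 2 * arctan \<bar>c / t\<bar>"
proof -
  have pos: "c\<^sup>2 + t\<^sup>2 > 0" using assms by (simp add: add_nonneg_pos)
  have "((- c, t) \<bullet> (c, t)) / (norm (- c, t) * norm (c, t)) = (t\<^sup>2 - c\<^sup>2) / (c\<^sup>2 + t\<^sup>2)"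
    by (simp add: inner_prod_def norm_Pair power2_eq_square)
  also have "\<dots> = (1 - \<bar>c / t\<bar>\<^sup>2) / (1 + \<bar>c / t\<bar>\<^sup>2)"
    using assms pos by (simp add: power_divide divide_simps)
  also have "\<dots> = cos (2 * arctan \<bar>c / t\<bar>)"
    by (simp add: cos_double_arctan)
  finally have "vangle (- c, t) (c, t) = arccos (cos (2 * arctan \<bar>c / t\<bar>))"
    by (simp add: vangle_def)
  also have "\<dots> = 2 * arctan \<bar>c / t\<bar>"
    using arctan_ubound[of "\<bar>c / t\<bar>"] by (intro arccos_cos) auto
  finally show ?thesis .
qed

lemma angle3_isosceles:
  fixes c h t :: real
  assumes "t \<noteq> 0"
  shows "angle3 (- c, h) (0, h - t) (c, h) = 2 * arctan \<bar>c / t\<bar>"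
  using vangle_isosceles[OF assms] by (simp add: angle3_def)

lemma dist_base_vertex_orthocenter_isosceles:
  fixes c h t :: real
  assumes "t \<noteq> 0"
  shows "dist (c, h) (0, h - c\<^sup>2 / t) = \<bar>c\<bar> / cos (arctan \<bar>c / t\<bar>)"
proof -
  have "dist (c, h) (0, h - c\<^sup>2 / t) = sqrt (c\<^sup>2 * (1 + (c / t)\<^sup>2))"
    using assms by (simp add: dist_Pair_Pair dist_real_def power_divide field_simps power2_eq_square)
  then show ?thesis by (simp add: real_sqrt_mult cos_arctan power_divide)
qed

lemma tree_length_half_angle_identity:
  fixes s d \<phi> :: real
  assumes "cos \<phi> \<noteq> 0" "2 * d * tan \<phi> = s"
  shows "s / cos \<phi> + 2 * sin \<phi> * (d - s * tan \<phi> / 2) = 2 * s * cos \<phi>"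
proof -
  have "2 * d * sin \<phi> = s * cos \<phi>"
    using assms by (simp add: tan_def field_simps)
  then have "s + 2 * sin \<phi> * (d * cos \<phi> - s * sin \<phi> / 2) = 2 * s * (cos \<phi>)\<^sup>2"
    using sin_cos_squared_add[of \<phi>] by algebra
  with assms(1) show ?thesis
    by (simp add: tan_def field_simps power2_eq_square)
qed

theorem proposition1:
  fixes a12 a34 d :: real and F F12 F34 :: "real \<times> real"
  assumes "a12 > 0" "a34 > 0" "d > 0" "d > max a12 a34"
    and "F \<in> closed_segment (- a12 / 2, d) (a34 / 2, 0)"
    and "F \<in> closed_segment (a12 / 2, d) (- a34 / 2, 0)"
    and "is_orthocenter F12 (- a12 / 2, d) F (a12 / 2, d)"
    and "is_orthocenter F34 (- a34 / 2, 0) F (a34 / 2, 0)"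
  shows "let \<theta> = angle3 (- a12 / 2, d) F (a12 / 2, d) in
    2 * dist (- a12 / 2, d) F12 + 2 * dist (a34 / 2, 0) F34 + wgt \<theta> * dist F12 F34
      = 2 * (a34 + a12) * cos (\<theta> / 2)"
proof -
  define s where "s = a12 + a34"
  define x where "x = s / (2 * d)"
  define p where "p = a12 / 2 / x"
  define q where "q = a34 / 2 / x"
  have pos: "s > 0" "x > 0" "p > 0" "q > 0"
    using assms(1-3) by (simp_all add: s_def x_def p_def q_def)
  have F_top: "F = (0, d - p)" and F_bottom: "F = (0, q)"
    using trapezium_diagonals_meet[OF _ _ assms(5,6)] assms(3) pos(1)
    by (simp_all add: s_def x_def p_def q_def field_simps)
  have F12: "F12 = (0, d - a12 / 2 * x)"
    using orthocenter_isosceles[of "a12 / 2" p F12 d] assms(1,7) pos F_top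
    by (simp add: p_def power2_eq_square)
  have F34: "F34 = (0, a34 / 2 * x)"
    using orthocenter_isosceles[of "a34 / 2" "- q" F34 0] assms(2,8) pos F_bottom
    by (simp add: q_def power2_eq_square)
  have \<theta>: "angle3 (- a12 / 2, d) F (a12 / 2, d) = 2 * arctan x"
    using angle3_isosceles[of p "a12 / 2" d] assms(1) pos F_top by (simp add: p_def)
  define \<phi> where "\<phi> = arctan x"
  have "s * x < 2 * d" \<comment> \<open>\<open>F\<^sub>1\<^sub>2\<close> lies above \<open>F\<^sub>3\<^sub>4\<close>: the only use of \<open>d > max a12 a34\<close>\<close>
    using assms(3,4) pos(1) mult_strict_mono[of s "2 * d" s "2 * d"] by (simp add: s_def x_def field_simps)
  then have dist_F12_F34: "dist F12 F34 = d - s * tan \<phi> / 2"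
    by (simp add: F12 F34 \<phi>_def tan_arctan dist_Pair_Pair dist_real_def s_def algebra_simps)
  have dist_top: "dist (- a12 / 2, d) F12 = a12 / 2 / cos \<phi>"
    using dist_base_vertex_orthocenter_isosceles[of p "- a12 / 2" d] assms(1) pos
    by (simp add: F12 \<phi>_def p_def power2_eq_square)
  have dist_bottom: "dist (a34 / 2, 0) F34 = a34 / 2 / cos \<phi>"
    using dist_base_vertex_orthocenter_isosceles[of "- q" "a34 / 2" 0] assms(2) pos
    by (simp add: F34 \<phi>_def q_def power2_eq_square)
  have "s / cos \<phi> + 2 * sin \<phi> * (d - s * tan \<phi> / 2) = 2 * s * cos \<phi>"
    using assms(3) by (intro tree_length_half_angle_identity) (simp_all add: \<phi>_def x_def tan_arctan)
  then show ?thesis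
    unfolding Let_def \<theta> \<phi>_def[symmetric] wgt_def dist_top dist_bottom dist_F12_F34
    by (simp add: s_def add_divide_distrib)
qed

end
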